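(* Let $K$ be a commutative field and $L$ a (possibly noncommutative) division ring containing $K$ in its center such that every element of $L\setminus K$ is transcendental over $K$. Let $A,B$ be nonzero finite-dimensional $K$-subspaces of $L$. Then $\dim_K\langle AB\rangle\geq\dim_KA+\dim_KB-1$.
   Context: For $S\subset L$, $\langle S\rangle$ denotes the $K$-subspace of $L$ spanned by $S$; $AB=\{ab\mid a\in A,b\in B\}$. *)

theory Defs
  imports Main
begin

definition is_subfield :: "'a::division_ring set \<Rightarrow> bool" where
  "is_subfield K \<longleftrightarrow> 0 \<in> K \<and> 1 \<in> K \<and>
     (\<forall>x\<in>K. \<forall>y\<in>K. x + y \<in> K \<and> x * y \<in> K) \<and>
     (\<forall>x\<in>K. - x \<in> K) \<and> (\<forall>x\<in>K. x \<noteq> 0 \<longrightarrow> inverse x \<in> K)"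

definition central :: "'a::division_ring set \<Rightarrow> bool" where
  "central K \<longleftrightarrow> (\<forall>k\<in>K. \<forall>x. k * x = x * k)"

definition algebraic_over :: "'a::division_ring set \<Rightarrow> 'a \<Rightarrow> bool" where
  "algebraic_over K x \<longleftrightarrow> (\<exists>(c::nat \<Rightarrow> 'a) n. (\<forall>i\<le>n. c i \<in> K) \<and> (\<exists>i\<le>n. c i \<noteq> 0)
      \<and> (\<Sum>i\<le>n. c i * x ^ i) = 0)"

definition transcendental_over :: "'a::division_ring set \<Rightarrow> 'a \<Rightarrow> bool" where
  "transcendental_over K x \<longleftrightarrow> \<not> algebraic_over K x"

definition Kspan :: "'a::division_ring set \<Rightarrow> 'a set \<Rightarrow> 'a set" where
  "Kspan K S = {(\<Sum>x\<in>F. c x * x) | F c. finite F \<and> F \<subseteq> S \<and> (\<forall>x\<in>F. c x \<in> K)}"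

definition Kindep :: "'a::division_ring set \<Rightarrow> 'a set \<Rightarrow> bool" where
  "Kindep K S \<longleftrightarrow> (\<forall>F c. finite F \<and> F \<subseteq> S \<and> (\<forall>x\<in>F. c x \<in> K) \<and> (\<Sum>x\<in>F. c x * x) = 0
      \<longrightarrow> (\<forall>x\<in>F. c x = 0))"

definition Ksubspace :: "'a::division_ring set \<Rightarrow> 'a set \<Rightarrow> bool" where
  "Ksubspace K V \<longleftrightarrow> 0 \<in> V \<and> (\<forall>x\<in>V. \<forall>y\<in>V. x + y \<in> V) \<and> (\<forall>k\<in>K. \<forall>x\<in>V. k * x \<in> V)"

definition Kfindim :: "'a::division_ring set \<Rightarrow> 'a set \<Rightarrow> bool" where
  "Kfindim K V \<longleftrightarrow> (\<exists>B. finite B \<and> B \<subseteq> V \<and> Kspan K B = V)"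

text \<open>Dimension = cardinality of a basis (well defined for finite-dimensional spaces).\<close>
definition Kdim :: "'a::division_ring set \<Rightarrow> 'a set \<Rightarrow> nat" where
  "Kdim K V = card (SOME B. B \<subseteq> V \<and> Kindep K B \<and> Kspan K B = V)"

definition setprod :: "'a::times set \<Rightarrow> 'a set \<Rightarrow> 'a set" where
  "setprod A B = {a * b | a b. a \<in> A \<and> b \<in> B}"

end

theory Submission
  imports Defs "HOL-Algebra.Embedded_Algebras"
begin

(* The proof follows Hamidoune's isoperimetric (atom) method.  Fix B and, for a finite-dimensional
   K-subspace X of L, put P X = <XB> and defect X = dim (P X) - dim X.  Let kappa be the least defect
   of a nonzero finite-dimensional subspace, and call an atom such a subspace of defect kappa and
   of minimal dimension.  Submodularity of the defect (Grassmann's formula applied to X + Y and to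
   X \<inter> Y) shows that two atoms meeting nontrivially coincide.  Left multiplication by a nonzero
   element maps atoms to atoms, so an atom H containing 1 is closed under multiplication; being
   finite-dimensional its elements are algebraic over K, hence H = K and kappa = defect K = dim B - 1.
   The theorem is the inequality kappa <= defect A. *)

text \<open>The division ring itself, viewed as a ring record with the full carrier, so that the
  vector-space theory of HOL-Algebra (Span, independent, dim over a subfield) applies.\<close>

definition RR :: "'a::division_ring ring" where
  "RR = \<lparr>carrier = UNIV, monoid.mult = (*), one = 1, zero = 0, add = (+)\<rparr>"

lemma RR_simps [simp]:
  "carrier RR = UNIV" "mult RR = (*)" "one RR = 1" "zero RR = 0" "add RR = (+)"
  by (simp_all add: RR_def)

lemma ring_RR: "ring (RR :: 'a::division_ring ring)"
proof -
  have "\<exists>y. x + y = 0" for x :: 'a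
    using add.right_inverse by blast
  thus ?thesis
    unfolding RR_def by unfold_locales (auto simp: algebra_simps Units_def)
qed

interpretation R: ring "RR :: 'a::division_ring ring"
  by (rule ring_RR)

lemma RR_ainv [simp]: "a_inv RR x = - (x::'a::division_ring)"
  by (rule R.minus_equality) auto

lemma RR_set_add: "set_add RR V W = {v + w | v w. v \<in> V \<and> w \<in> W}"
  by (auto simp: set_add_def set_mult_def)

lemma Ksubspace_iff_subalgebra:
  assumes "is_subfield K"
  shows "Ksubspace K V \<longleftrightarrow> subalgebra K V (RR::'a::division_ring ring)"
proof
  assume V: "Ksubspace K V"
  have neg: "- x \<in> V" if "x \<in> V" for x
  proof -
    have "- 1 \<in> K" using assms by (simp add: is_subfield_def)
    hence "(-1) * x \<in> V" using V that unfolding Ksubspace_def by blast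
    thus ?thesis by simp
  qed
  show "subalgebra K V RR"
    by (rule subalgebra.intro, rule R.add.subgroupI)
      (use V neg in \<open>auto simp: Ksubspace_def subalgebra_axioms_def\<close>)
next
  assume "subalgebra K V (RR::'a ring)"
  then interpret S: subalgebra K V "RR::'a ring" .
  show "Ksubspace K V"
    unfolding Ksubspace_def using S.one_closed S.m_closed S.smult_closed by auto
qed

section \<open>Linear algebra over a central subfield\<close>

locale central_subfield =
  fixes K :: "'a::division_ring set"
  assumes subfield_K: "is_subfield K" and central_K: "central K"
begin

lemma K0: "0 \<in> K" and K1: "1 \<in> K" and Kadd: "x \<in> K \<Longrightarrow> y \<in> K \<Longrightarrow> x + y \<in> K"
  and Kmul: "x \<in> K \<Longrightarrow> y \<in> K \<Longrightarrow> x * y \<in> K" and Kneg: "x \<in> K \<Longrightarrow> - x \<in> K"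
  and Kinv: "x \<in> K \<Longrightarrow> inverse x \<in> K"
  using subfield_K unfolding is_subfield_def by auto

lemma Kcomm: "k \<in> K \<Longrightarrow> k * x = x * k"
  using central_K unfolding central_def by blast

text \<open>K is a subfield of RR in the sense of HOL-Algebra (commutative because it is central).\<close>

lemma subfield: "subfield K (RR::'a ring)"
proof (rule R.subfieldI)
  have "subring K (RR::'a ring)"
    by (rule R.subringI) (auto intro: K1 Kneg Kmul Kadd)
  thus "subcring K (RR::'a ring)"
    by (rule R.subcringI) (use Kcomm in auto)
  show "Units ((RR::'a ring)\<lparr>carrier := K\<rparr>) = K - {\<zero>\<^bsub>RR\<^esub>}"
    unfolding RR_simps
  proof
    show "Units ((RR::'a ring)\<lparr>carrier := K\<rparr>) \<subseteq> K - {0}"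
      by (auto simp: Units_def)
    show "K - {0} \<subseteq> Units ((RR::'a ring)\<lparr>carrier := K\<rparr>)"
      unfolding Units_def using Kinv by auto (metis left_inverse right_inverse)
  qed
qed

lemma Ksubspace_iff: "Ksubspace K V \<longleftrightarrow> subalgebra K V (RR::'a ring)"
  by (rule Ksubspace_iff_subalgebra[OF subfield_K])

lemma Ksubspace_inter: "Ksubspace K V \<Longrightarrow> Ksubspace K W \<Longrightarrow> Ksubspace K (V \<inter> W)"
  unfolding Ksubspace_def by auto

lemma Kspan_superset: "S \<subseteq> Kspan K S"
proof
  fix x assume "x \<in> S"
  thus "x \<in> Kspan K S"
    unfolding Kspan_def by (intro CollectI exI[of _ "{x}"] exI[of _ "\<lambda>_. 1"]) (simp add: K1)
qed

lemma Kspan_least: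
  assumes V: "Ksubspace K V" and SV: "S \<subseteq> V"
  shows "Kspan K S \<subseteq> V"
proof
  fix x assume "x \<in> Kspan K S"
  then obtain F c where x: "x = (\<Sum>y\<in>F. c y * y)" and F: "finite F" "F \<subseteq> S" "\<forall>y\<in>F. c y \<in> K"
    unfolding Kspan_def by blast
  have "F \<subseteq> V \<Longrightarrow> (\<forall>y\<in>F. c y \<in> K) \<Longrightarrow> (\<Sum>y\<in>F. c y * y) \<in> V"
    using F(1)
  proof (induction F rule: finite_induct)
    case empty thus ?case using V unfolding Ksubspace_def by simp
  next
    case (insert a F)
    have "c a * a \<in> V" and "(\<Sum>y\<in>F. c y * y) \<in> V"
      using V insert unfolding Ksubspace_def by blast+
    thus ?case using V insert.hyps unfolding Ksubspace_def by simp
  qed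
  thus "x \<in> V" using x F SV by blast
qed

lemma Kspan_subspace: "Ksubspace K (Kspan K S)"
  unfolding Ksubspace_def
proof (intro conjI ballI)
  show "0 \<in> Kspan K S"
    unfolding Kspan_def by (intro CollectI exI[of _ "{}"]) auto
next
  fix x y assume "x \<in> Kspan K S" "y \<in> Kspan K S"
  then obtain F c G d where x: "x = (\<Sum>y\<in>F. c y * y)" and F: "finite F" "F \<subseteq> S" "\<forall>y\<in>F. c y \<in> K"
    and y: "y = (\<Sum>y\<in>G. d y * y)" and G: "finite G" "G \<subseteq> S" "\<forall>y\<in>G. d y \<in> K"
    unfolding Kspan_def by blast
  define e where "e z = (if z \<in> F then c z else 0) + (if z \<in> G then d z else 0)" for z
  have "(\<Sum>z\<in>F \<union> G. e z * z) = (\<Sum>z\<in>F \<union> G. (if z \<in> F then c z else 0) * z)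
      + (\<Sum>z\<in>F \<union> G. (if z \<in> G then d z else 0) * z)"
    unfolding e_def by (simp add: distrib_right sum.distrib)
  also have "\<dots> = x + y"
    unfolding x y using F(1) G(1) by (intro arg_cong2[where f = "(+)"] sum.mono_neutral_cong_right) auto
  finally have "x + y = (\<Sum>z\<in>F \<union> G. e z * z)" ..
  moreover have "\<forall>z\<in>F \<union> G. e z \<in> K" using F G by (auto simp: e_def intro: Kadd K0)
  ultimately show "x + y \<in> Kspan K S"
    unfolding Kspan_def using F G by (intro CollectI exI[of _ "F \<union> G"] exI[of _ e]) auto
next
  fix k x assume k: "k \<in> K" and "x \<in> Kspan K S"
  then obtain F c where x: "x = (\<Sum>y\<in>F. c y * y)" and F: "finite F" "F \<subseteq> S" "\<forall>y\<in>F. c y \<in> K"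
    unfolding Kspan_def by blast
  have "k * x = (\<Sum>y\<in>F. (k * c y) * y)" unfolding x by (simp add: sum_distrib_left mult.assoc)
  moreover have "\<forall>y\<in>F. k * c y \<in> K" using F k by (auto intro: Kmul)
  ultimately show "k * x \<in> Kspan K S"
    unfolding Kspan_def using F by (intro CollectI exI[of _ F] exI[of _ "\<lambda>y. k * c y"]) auto
qed

lemma Kspan_list: "Kspan K (set Us) = R.Span K Us"
proof
  have "Ksubspace K (R.Span K Us)"
    using R.Span_is_subalgebra[OF subfield] Ksubspace_iff by auto
  thus "Kspan K (set Us) \<subseteq> R.Span K Us"
    by (rule Kspan_least) (use R.Span_base_incl[OF subfield, of Us] in auto)
  show "R.Span K Us \<subseteq> Kspan K (set Us)"
    by (rule R.subalgebra_Span_incl[OF subfield])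
      (use Kspan_subspace Ksubspace_iff Kspan_superset in auto)
qed

lemma combine_nth:
  "length Ks = length Us \<Longrightarrow> R.combine Ks Us = (\<Sum>i<length Us. Ks ! i * Us ! i)"
proof (induction Us arbitrary: Ks)
  case (Cons u Us)
  then obtain k Ks' where "Ks = k # Ks'" "length Ks' = length Us" by (cases Ks) auto
  thus ?case using Cons.IH by (simp add: sum.lessThan_Suc_shift del: sum.lessThan_Suc)
qed simp

lemma combine_distinct: "distinct Us \<Longrightarrow> R.combine (map f Us) Us = (\<Sum>u\<in>set Us. f u * u)"
  by (induction Us) auto

lemma independent_imp_Kindep:
  assumes ind: "R.independent K Us" shows "Kindep K (set Us)"
  unfolding Kindep_def
proof (intro allI impI ballI)
  fix F c x
  assume H: "finite F \<and> F \<subseteq> set Us \<and> (\<forall>x\<in>F. c x \<in> K) \<and> (\<Sum>x\<in>F. c x * x) = 0" and x: "x \<in> F"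
  define f where "f u = (if u \<in> F then c u else 0)" for u
  have "R.combine (map f Us) Us = (\<Sum>u\<in>set Us. f u * u)"
    using combine_distinct[OF R.independent_distinct[OF subfield ind]] .
  also have "\<dots> = (\<Sum>x\<in>F. c x * x)"
    unfolding f_def using H by (intro sum.mono_neutral_cong_right) auto
  finally have "R.combine (map f Us) Us = \<zero>\<^bsub>RR\<^esub>" using H by simp
  moreover have "set (map f Us) \<subseteq> K" using H K0 by (auto simp: f_def)
  ultimately have "set (map f Us) \<subseteq> {0}"
    using R.independent_imp_trivial_combine[OF subfield ind] by fastforce
  moreover have "f x \<in> set (map f Us)" using H x by auto
  ultimately have "f x = 0" by blast
  thus "c x = 0" using x by (simp add: f_def)
qed

lemma Kindep_imp_independent:
  assumes dist: "distinct Us" and KI: "Kindep K (set Us)" shows "R.independent K Us"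
proof (rule ccontr)
  assume dep: "\<not> R.independent K Us"
  obtain Ks where Ks: "length Ks = length Us" "R.combine Ks Us = \<zero>\<^bsub>RR\<^esub>" "set Ks \<subseteq> K"
      "set Ks \<noteq> {\<zero>\<^bsub>RR\<^esub>}"
    using R.dependent_imp_non_trivial_combine[OF subfield _ dep] by auto
  define c where "c x = Ks ! (THE i. i < length Us \<and> Us ! i = x)" for x
  have th: "(THE j. j < length Us \<and> Us ! j = Us ! i) = i" if "i < length Us" for i
    by (rule the_equality) (use that dist nth_eq_iff_index_eq in auto)
  have map: "map c Us = Ks"
    by (rule nth_equalityI) (use Ks(1) th in \<open>auto simp: c_def\<close>)
  have "(\<Sum>u\<in>set Us. c u * u) = 0" using Ks(2) combine_distinct[OF dist, of c] map by simp
  moreover have "\<forall>x\<in>set Us. c x \<in> K" using Ks(3) map by auto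
  ultimately have "\<forall>x\<in>set Us. c x = 0" using KI unfolding Kindep_def by blast
  hence "set Ks \<subseteq> {0}" using map by auto
  hence "Ks = []" using Ks(4) by (metis RR_simps(4) set_empty subset_singletonD)
  hence "Us = []" using Ks(1) by simp
  thus False using dep by simp
qed

lemma finite_dim_Kspan: "finite S \<Longrightarrow> R.finite_dimension K (Kspan K S)"
  using finite_list Kspan_list R.Span_finite_dimension[OF subfield] by fastforce

lemma Kfindim_imp_finite_dim: "Kfindim K V \<Longrightarrow> R.finite_dimension K V"
  unfolding Kfindim_def using finite_dim_Kspan by auto

lemma finite_dim_subspace: "R.finite_dimension K V \<Longrightarrow> Ksubspace K V"
  using R.finite_dimension_imp_subalgebra[OF subfield] Ksubspace_iff by auto

lemma dimension_dim: "R.finite_dimension K V \<Longrightarrow> R.dimension (R.dim K V) K V"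
  using R.finite_dimensionE[OF subfield] unfolding over_def by blast

lemma dim_eqI: "R.dimension n K V \<Longrightarrow> R.dim K V = n"
  using R.dimI[OF subfield] unfolding over_def by blast

lemma finite_dim_base:
  assumes "R.finite_dimension K V"
  obtains Vs where "R.independent K Vs" "length Vs = R.dim K V" "R.Span K Vs = V"
  using R.exists_base[OF subfield dimension_dim[OF assms]] by blast

lemma Kindep_card_le:
  assumes dimV: "R.dimension n K V" and EV: "E \<subseteq> V" and ind: "Kindep K E"
  shows "finite E" and "card E \<le> n"
proof -
  have card_le: "card F \<le> n" if FE: "F \<subseteq> E" "finite F" for F
  proof -
    obtain Us where Us: "set Us = F" "distinct Us" using finite_distinct_list[OF FE(2)] by blast
    have "Kindep K (set Us)" using ind Us(1) FE(1) unfolding Kindep_def by blast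
    hence "R.independent K Us" by (rule Kindep_imp_independent[OF Us(2)])
    hence "length Us \<le> n"
      using R.independent_length_le_dimension[OF subfield dimV] Us FE EV by auto
    thus ?thesis using Us distinct_card by metis
  qed
  show "finite E"
  proof (rule ccontr)
    assume "infinite E"
    then obtain F where "F \<subseteq> E" "finite F" "card F = Suc n"
      using infinite_arbitrarily_large by blast
    thus False using card_le[of F] by simp
  qed
  thus "card E \<le> n" using card_le by blast
qed

lemma Kdim_eq_dim:
  assumes fd: "R.finite_dimension K V" shows "Kdim K V = R.dim K V"
proof -
  define n where "n = R.dim K V"
  have dimV: "R.dimension n K V" using dimension_dim[OF fd] n_def by simp
  let ?basis = "\<lambda>E. E \<subseteq> V \<and> Kindep K E \<and> Kspan K E = V"
  obtain Vs where Vs: "R.independent K Vs" "R.Span K Vs = V"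
    using finite_dim_base[OF fd] by blast
  have "?basis (set Vs)"
    using independent_imp_Kindep[OF Vs(1)] Kspan_list Vs(2) R.Span_base_incl[OF subfield, of Vs]
    by auto
  hence "?basis (SOME E. ?basis E)" by (rule someI)
  then obtain E where E: "Kdim K V = card E" "E \<subseteq> V" "Kindep K E" "Kspan K E = V"
    unfolding Kdim_def by blast
  obtain Us where Us: "set Us = E" "distinct Us"
    using finite_distinct_list[OF Kindep_card_le(1)[OF dimV E(2,3)]] by blast
  have "R.independent K Us" using Kindep_imp_independent Us E(3) by blast
  moreover have "R.Span K Us = V" using Kspan_list Us(1) E(4) by metis
  ultimately have "R.dimension (length Us) K V" using R.dimensionI[OF subfield] by blast
  hence "length Us = n" using R.dimension_is_inj[OF subfield dimV] by simp
  thus ?thesis unfolding E(1) n_def using Us distinct_card by metis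
qed

lemma dim_mono:
  assumes W: "R.finite_dimension K W" and V: "Ksubspace K V" and VW: "V \<subseteq> W"
  shows "R.finite_dimension K V" and "R.dim K V \<le> R.dim K W"
proof -
  show fV: "R.finite_dimension K V"
    using R.subalbegra_incl_imp_finite_dimension[OF subfield W _ VW] V Ksubspace_iff by blast
  obtain Vs where Vs: "R.independent K Vs" "length Vs = R.dim K V" "R.Span K Vs = V"
    using finite_dim_base[OF fV] by blast
  have "set Vs \<subseteq> W" using R.Span_base_incl[OF subfield, of Vs] Vs(3) VW by auto
  thus "R.dim K V \<le> R.dim K W"
    using R.independent_length_le_dimension[OF subfield dimension_dim[OF W] Vs(1)] Vs(2) by simp
qed

lemma dim_eq_imp_eq:
  assumes W: "R.finite_dimension K W" and V: "Ksubspace K V" and VW: "V \<subseteq> W"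
    and eq: "R.dim K V = R.dim K W"
  shows "V = W"
proof -
  obtain Vs where Vs: "R.independent K Vs" "length Vs = R.dim K V" "R.Span K Vs = V"
    using finite_dim_base[OF dim_mono(1)[OF W V VW]] by blast
  have "set Vs \<subseteq> W" using R.Span_base_incl[OF subfield, of Vs] Vs(3) VW by auto
  thus ?thesis
    using R.independent_length_eq_dimension[OF subfield dimension_dim[OF W] Vs(1)] Vs eq by simp
qed

lemma dim_zero: "R.finite_dimension K V \<Longrightarrow> R.dim K V = 0 \<Longrightarrow> V = {0}"
  using R.dimension_zero[OF subfield] dimension_dim by fastforce

lemma finite_dim_K: "R.finite_dimension K K" and dim_K: "R.dim K K = 1"
  using R.finite_dimensionI dim_eqI R.dimension_one[OF subfield] by auto

definition ssum :: "'a set \<Rightarrow> 'a set \<Rightarrow> 'a set" where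
  "ssum V W = {v + w | v w. v \<in> V \<and> w \<in> W}"

lemma grassmann:
  assumes "R.finite_dimension K V" "R.finite_dimension K W"
  shows "R.finite_dimension K (ssum V W)"
    and "R.dim K (ssum V W) = R.dim K V + R.dim K W - R.dim K (V \<inter> W)"
  using R.sum_space_dim[OF subfield assms] unfolding over_def RR_set_add ssum_def by auto

text \<open>Left multiplication by any element and right multiplication by any element are K-linear
  (the former because K is central); injective K-linear maps preserve dimension.\<close>

definition Klinear :: "('a \<Rightarrow> 'a) \<Rightarrow> bool" where
  "Klinear f \<longleftrightarrow> (\<forall>x y. f (x + y) = f x + f y) \<and> (\<forall>k\<in>K. \<forall>x. f (k * x) = k * f x)"

lemma Klinear_left_mult: "Klinear ((*) a)"
  unfolding Klinear_def by (auto simp: distrib_left) (metis Kcomm mult.assoc)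

lemma Klinear_right_mult: "Klinear (\<lambda>x. x * a)"
  unfolding Klinear_def by (simp add: distrib_right mult.assoc)

lemma Klinear_zero: "Klinear f \<Longrightarrow> f 0 = 0"
  unfolding Klinear_def by (metis add_0 add_cancel_right_right)

lemma Klinear_combine:
  assumes f: "Klinear f"
  shows "set Ks \<subseteq> K \<Longrightarrow> R.combine Ks (map f Us) = f (R.combine Ks Us)"
proof (induction Us arbitrary: Ks)
  case Nil thus ?case using Klinear_zero[OF f] by simp
next
  case (Cons u Us)
  show ?case
  proof (cases Ks)
    case Nil thus ?thesis using Klinear_zero[OF f] by simp
  next
    case (Cons k Ks')
    hence "k \<in> K" and "set Ks' \<subseteq> K" using Cons.prems by auto
    thus ?thesis using Cons.IH f unfolding Cons Klinear_def by simp
  qed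
qed

lemma Klinear_Span:
  assumes f: "Klinear f" shows "R.Span K (map f Us) = f ` R.Span K Us"
proof -
  have "R.Span K (map f Us) = {R.combine Ks (map f Us) | Ks. set Ks \<subseteq> K}"
    by (rule R.Span_eq_combine_set[OF subfield]) simp
  also have "\<dots> = {f (R.combine Ks Us) | Ks. set Ks \<subseteq> K}"
    using Klinear_combine[OF f] by metis
  also have "\<dots> = f ` {R.combine Ks Us | Ks. set Ks \<subseteq> K}"
    by blast
  also have "{R.combine Ks Us | Ks. set Ks \<subseteq> K} = R.Span K Us"
    by (rule R.Span_eq_combine_set[OF subfield, symmetric]) simp
  finally show ?thesis .
qed

lemma Klinear_dim:
  assumes f: "Klinear f" and inj: "inj f" and fV: "R.finite_dimension K V"
  shows "R.finite_dimension K (f ` V)" and "R.dim K (f ` V) = R.dim K V"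
proof -
  obtain Vs where Vs: "R.independent K Vs" "length Vs = R.dim K V" "R.Span K Vs = V"
    using finite_dim_base[OF fV] by blast
  have "R.independent K (map f Vs)"
  proof (rule R.trivial_combine_imp_independent[OF subfield])
    fix Ks assume Ks: "set Ks \<subseteq> K" "R.combine Ks (map f Vs) = \<zero>\<^bsub>RR\<^esub>"
    hence "R.combine Ks Vs = \<zero>\<^bsub>RR\<^esub>"
      using Klinear_combine[OF f Ks(1)] Klinear_zero[OF f] inj by (metis RR_simps(4) injD)
    thus "set (take (length (map f Vs)) Ks) \<subseteq> {\<zero>\<^bsub>RR\<^esub>}"
      using R.independent_imp_trivial_combine[OF subfield Vs(1) Ks(1)] by simp
  qed simp
  hence "R.dimension (length Vs) K (f ` V)"
    using R.dimension_independent Klinear_Span[OF f, of Vs] Vs(3) by fastforce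
  thus "R.finite_dimension K (f ` V)" and "R.dim K (f ` V) = R.dim K V"
    using R.finite_dimensionI dim_eqI Vs(2) by auto
qed

lemma Klinear_image_subspace:
  assumes f: "Klinear f" and V: "Ksubspace K V" shows "Ksubspace K (f ` V)"
  unfolding Ksubspace_def
proof (intro conjI ballI)
  show "0 \<in> f ` V" using V Klinear_zero[OF f] unfolding Ksubspace_def by force
next
  fix a b assume "a \<in> f ` V" "b \<in> f ` V"
  then obtain x y where "a = f x" "b = f y" "x \<in> V" "y \<in> V" by blast
  moreover have "x + y \<in> V" and "f (x + y) = f x + f y"
    using f V \<open>x \<in> V\<close> \<open>y \<in> V\<close> unfolding Klinear_def Ksubspace_def by blast+
  ultimately show "a + b \<in> f ` V" by (metis image_eqI)
next
  fix k a assume k: "k \<in> K" and "a \<in> f ` V"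
  then obtain x where "a = f x" "x \<in> V" by blast
  moreover have "k * x \<in> V" and "f (k * x) = k * f x"
    using f V k \<open>x \<in> V\<close> unfolding Klinear_def Ksubspace_def by blast+
  ultimately show "k * a \<in> f ` V" by (metis image_eqI)
qed

lemma Klinear_preimage_subspace:
  assumes f: "Klinear f" and W: "Ksubspace K W" shows "Ksubspace K {x. f x \<in> W}"
  using f W Klinear_zero[OF f] unfolding Ksubspace_def Klinear_def by auto

lemma left_mult_dim:
  assumes "a \<noteq> 0" "R.finite_dimension K V"
  shows "R.finite_dimension K ((*) a ` V)" and "R.dim K ((*) a ` V) = R.dim K V"
proof -
  have "inj ((*) a)" using assms(1) by (auto intro: injI)
  thus "R.finite_dimension K ((*) a ` V)" and "R.dim K ((*) a ` V) = R.dim K V"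
    using Klinear_dim[OF Klinear_left_mult _ assms(2)] by auto
qed

lemma right_mult_dim:
  assumes "a \<noteq> 0" "R.finite_dimension K V"
  shows "R.finite_dimension K ((\<lambda>x. x * a) ` V)" and "R.dim K ((\<lambda>x. x * a) ` V) = R.dim K V"
proof -
  have "inj (\<lambda>x. x * a)" using assms(1) by (auto intro: injI)
  thus "R.finite_dimension K ((\<lambda>x. x * a) ` V)" and "R.dim K ((\<lambda>x. x * a) ` V) = R.dim K V"
    using Klinear_dim[OF Klinear_right_mult _ assms(2)] by auto
qed

lemma setprod_Kspan: "setprod (Kspan K S) (Kspan K T) \<subseteq> Kspan K (setprod S T)"
proof -
  let ?W = "Kspan K (setprod S T)"
  have W: "Ksubspace K ?W" by (rule Kspan_subspace)
  have left: "Kspan K T \<subseteq> {b. s * b \<in> ?W}" if "s \<in> S" for s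
    using that Kspan_superset[of "setprod S T"]
    by (intro Kspan_least Klinear_preimage_subspace[OF Klinear_left_mult W])
      (auto simp: setprod_def)
  have "Kspan K S \<subseteq> {a. a * b \<in> ?W}" if "b \<in> Kspan K T" for b
    using that left by (intro Kspan_least Klinear_preimage_subspace[OF Klinear_right_mult W]) auto
  thus ?thesis unfolding setprod_def by blast
qed

text \<open>A finite-dimensional subspace containing 1 and closed under multiplication consists of
  algebraic elements: the powers of any of its elements are linearly dependent.\<close>

lemma finite_dim_algebra_algebraic:
  assumes fH: "R.finite_dimension K H" and one: "1 \<in> H"
    and closed: "\<And>a b. a \<in> H \<Longrightarrow> b \<in> H \<Longrightarrow> a * b \<in> H" and h: "h \<in> H"
  shows "algebraic_over K h"
proof -
  define n where "n = R.dim K H"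
  define Us where "Us = map (\<lambda>i. h ^ i) [0..<Suc n]"
  have length_Us: "length Us = Suc n" unfolding Us_def by simp
  have "h ^ i \<in> H" for i by (induction i) (use one closed h in auto)
  hence "set Us \<subseteq> H" unfolding Us_def by auto
  have dependent: "\<not> R.independent K Us"
  proof
    assume "R.independent K Us"
    hence "length Us \<le> n"
      using R.independent_length_le_dimension[OF subfield dimension_dim[OF fH]] \<open>set Us \<subseteq> H\<close> n_def
      by blast
    thus False using length_Us by simp
  qed
  then obtain Ks where Ks: "length Ks = length Us" "R.combine Ks Us = \<zero>\<^bsub>RR\<^esub>" "set Ks \<subseteq> K"
      "set Ks \<noteq> {\<zero>\<^bsub>RR\<^esub>}"
    using R.dependent_imp_non_trivial_combine[OF subfield _ dependent] by auto
  have "R.combine Ks Us = (\<Sum>i<Suc n. Ks ! i * h ^ i)"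
    unfolding combine_nth[OF Ks(1)] length_Us
    by (intro sum.cong) (auto simp: Us_def nth_append simp del: upt_Suc)
  hence "(\<Sum>i\<le>n. Ks ! i * h ^ i) = 0" using Ks(2) lessThan_Suc_atMost by simp
  moreover have "\<forall>i\<le>n. Ks ! i \<in> K" using Ks(1,3) length_Us by auto
  moreover have "\<exists>i\<le>n. Ks ! i \<noteq> 0"
  proof -
    have "set Ks \<noteq> {}" using Ks(1) length_Us by auto
    hence "\<not> set Ks \<subseteq> {0}" using Ks(4) by (metis RR_simps(4) subset_singletonD)
    then obtain i where "i < length Ks" "Ks ! i \<noteq> 0" by (metis in_set_conv_nth singletonI subsetI)
    thus ?thesis using Ks(1) length_Us by (intro exI[of _ i]) simp
  qed
  ultimately show ?thesis unfolding algebraic_over_def by blast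
qed

end

section \<open>The product operator and its defect\<close>

locale product_space = central_subfield +
  fixes B :: "'a set"
  assumes finite_dim_B: "R.finite_dimension K B" and B_nonzero: "B \<noteq> {0}"
begin

definition P :: "'a set \<Rightarrow> 'a set" where
  "P X = Kspan K (setprod X B)"

lemma B_subspace: "Ksubspace K B"
  by (rule finite_dim_subspace[OF finite_dim_B])

lemma P_subspace: "Ksubspace K (P X)"
  unfolding P_def by (rule Kspan_subspace)

lemma setprod_P: "x \<in> X \<Longrightarrow> b \<in> B \<Longrightarrow> x * b \<in> P X"
  using Kspan_superset[of "setprod X B"] unfolding P_def setprod_def by blast

lemma P_least:
  assumes W: "Ksubspace K W" and XBW: "\<And>x b. x \<in> X \<Longrightarrow> b \<in> B \<Longrightarrow> x * b \<in> W"
  shows "P X \<subseteq> W"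
proof -
  have "setprod X B \<subseteq> W" using XBW unfolding setprod_def by blast
  thus ?thesis unfolding P_def by (rule Kspan_least[OF W])
qed

lemma P_mono: "X \<subseteq> Y \<Longrightarrow> P X \<subseteq> P Y"
  by (rule P_least[OF P_subspace]) (simp add: setprod_P subset_iff)

text \<open>If X and B are spanned by finite lists, \<open>P X\<close> lies in the span of their pairwise products.\<close>

lemma finite_dim_P:
  assumes fX: "R.finite_dimension K X" shows "R.finite_dimension K (P X)"
proof -
  obtain Xs where Xs: "Kspan K (set Xs) = X"
    using finite_dim_base[OF fX] Kspan_list by metis
  obtain Bs where Bs: "Kspan K (set Bs) = B"
    using finite_dim_base[OF finite_dim_B] Kspan_list by metis
  define W where "W = Kspan K (setprod (set Xs) (set Bs))"
  have "finite (setprod (set Xs) (set Bs))"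
    unfolding setprod_def by (simp add: finite_image_set2)
  hence fW: "R.finite_dimension K W" unfolding W_def by (rule finite_dim_Kspan)
  have "P X \<subseteq> W"
    using setprod_Kspan[of "set Xs" "set Bs"] Xs Bs
    by (intro P_least) (auto simp: W_def setprod_def Kspan_subspace)
  thus ?thesis using dim_mono(1)[OF fW P_subspace] by blast
qed

lemma P_ssum:
  assumes "R.finite_dimension K X" "R.finite_dimension K Y"
  shows "P (ssum X Y) \<subseteq> ssum (P X) (P Y)"
proof (rule P_least)
  show "Ksubspace K (ssum (P X) (P Y))"
    using grassmann(1) finite_dim_P assms finite_dim_subspace by blast
  fix z b assume "z \<in> ssum X Y" "b \<in> B"
  then obtain x y where "z = x + y" "x \<in> X" "y \<in> Y" unfolding ssum_def by blast
  moreover have "x * b \<in> P X" "y * b \<in> P Y" using setprod_P \<open>b \<in> B\<close> calculation by auto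
  ultimately show "z * b \<in> ssum (P X) (P Y)"
    unfolding ssum_def by (auto simp: distrib_right)
qed

lemma P_left_mult_subset: "P ((*) a ` X) \<subseteq> (*) a ` P X"
  using setprod_P by (intro P_least Klinear_image_subspace[OF Klinear_left_mult P_subspace])
    (auto simp: mult.assoc)

lemma P_left_mult:
  assumes a: "a \<noteq> 0" shows "P ((*) a ` X) = (*) a ` P X"
proof
  show "P ((*) a ` X) \<subseteq> (*) a ` P X" by (rule P_left_mult_subset)
  have "P X \<subseteq> (*) (inverse a) ` P ((*) a ` X)"
    using P_left_mult_subset[of "inverse a" "(*) a ` X"] a
    by (simp add: image_image mult.assoc[symmetric])
  hence "(*) a ` P X \<subseteq> (*) a ` (*) (inverse a) ` P ((*) a ` X)"
    by (rule image_mono)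
  thus "(*) a ` P X \<subseteq> P ((*) a ` X)"
    using a by (simp add: image_image mult.assoc[symmetric])
qed

text \<open>Scalar multiples of B stay in B, so \<open>P K = B\<close> and \<open>defect K = dim B - 1\<close>.\<close>

lemma P_K: "P K = B"
proof
  show "P K \<subseteq> B"
    using B_subspace by (intro P_least) (auto simp: Ksubspace_def)
  show "B \<subseteq> P K"
    using setprod_P[OF K1] by auto
qed

text \<open>Right multiplication by a nonzero element of B embeds X into \<open>P X\<close>.\<close>

lemma dim_le_dim_P:
  assumes fX: "R.finite_dimension K X" shows "R.dim K X \<le> R.dim K (P X)"
proof -
  obtain b where b: "b \<in> B" "b \<noteq> 0"
    using B_nonzero B_subspace unfolding Ksubspace_def by blast
  have "(\<lambda>x. x * b) ` X \<subseteq> P X" using setprod_P b by blast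
  hence "R.dim K ((\<lambda>x. x * b) ` X) \<le> R.dim K (P X)"
    using dim_mono(2)[OF finite_dim_P[OF fX] finite_dim_subspace[OF right_mult_dim(1)[OF b(2) fX]]]
    by blast
  thus ?thesis using right_mult_dim(2)[OF b(2) fX] by simp
qed

definition defect :: "'a set \<Rightarrow> nat" where
  "defect X = R.dim K (P X) - R.dim K X"

text \<open>The defect is submodular; this is where Grassmann's formula enters.\<close>

lemma defect_submodular:
  assumes fX: "R.finite_dimension K X" and fY: "R.finite_dimension K Y"
  shows "defect (X \<inter> Y) + defect (ssum X Y) \<le> defect X + defect Y"
proof -
  have sI: "Ksubspace K (X \<inter> Y)"
    using finite_dim_subspace fX fY Ksubspace_inter by blast
  have fI: "R.finite_dimension K (X \<inter> Y)" and dI: "R.dim K (X \<inter> Y) \<le> R.dim K X"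
    using dim_mono[OF fX sI] by auto
  have fU: "R.finite_dimension K (ssum X Y)"
    and dU: "R.dim K (ssum X Y) = R.dim K X + R.dim K Y - R.dim K (X \<inter> Y)"
    using grassmann[OF fX fY] by auto
  have fPX: "R.finite_dimension K (P X)" and fPY: "R.finite_dimension K (P Y)"
    using finite_dim_P fX fY by auto
  have sPI: "Ksubspace K (P X \<inter> P Y)" by (rule Ksubspace_inter[OF P_subspace P_subspace])
  have fPI: "R.finite_dimension K (P X \<inter> P Y)" and q: "R.dim K (P X \<inter> P Y) \<le> R.dim K (P X)"
    using dim_mono[OF fPX sPI] by auto
  have "P (X \<inter> Y) \<subseteq> P X \<inter> P Y" using P_mono by blast
  hence pI: "R.dim K (P (X \<inter> Y)) \<le> R.dim K (P X \<inter> P Y)"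
    using dim_mono(2)[OF fPI P_subspace] by blast
  have "R.dim K (P (ssum X Y)) \<le> R.dim K (ssum (P X) (P Y))"
    using dim_mono(2)[OF grassmann(1)[OF fPX fPY] P_subspace P_ssum[OF fX fY]] .
  hence pU: "R.dim K (P (ssum X Y)) \<le> R.dim K (P X) + R.dim K (P Y) - R.dim K (P X \<inter> P Y)"
    using grassmann(2)[OF fPX fPY] by simp
  show ?thesis
    using dI dU q pI pU dim_le_dim_P[OF fX] dim_le_dim_P[OF fY] dim_le_dim_P[OF fI]
      dim_le_dim_P[OF fU]
    unfolding defect_def by linarith
qed


lemma defect_left_mult:
  assumes "a \<noteq> 0" "R.finite_dimension K X"
  shows "defect ((*) a ` X) = defect X"
  using left_mult_dim[OF assms] left_mult_dim(2)[OF assms(1) finite_dim_P[OF assms(2)]]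
  unfolding defect_def P_left_mult[OF assms(1)] by simp

subsection \<open>Atoms\<close>

definition admissible :: "'a set \<Rightarrow> bool" where
  "admissible X \<longleftrightarrow> R.finite_dimension K X \<and> X \<noteq> {0}"

definition min_defect :: nat where
  "min_defect = (LEAST k. \<exists>X. admissible X \<and> defect X = k)"

definition atom_dim :: nat where
  "atom_dim = (LEAST d. \<exists>X. admissible X \<and> defect X = min_defect \<and> R.dim K X = d)"

definition atom :: "'a set \<Rightarrow> bool" where
  "atom X \<longleftrightarrow> admissible X \<and> defect X = min_defect \<and> R.dim K X = atom_dim"

lemma admissible_K: "admissible K"
  unfolding admissible_def using finite_dim_K K1 by auto

lemma min_defect_le: "admissible X \<Longrightarrow> min_defect \<le> defect X"
  unfolding min_defect_def by (rule Least_le) blast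

lemma atom_dim_le: "admissible X \<Longrightarrow> defect X = min_defect \<Longrightarrow> atom_dim \<le> R.dim K X"
  unfolding atom_dim_def by (rule Least_le) blast

lemma atom_exists: "\<exists>X. atom X"
proof -
  have "\<exists>X. admissible X \<and> defect X = min_defect"
    unfolding min_defect_def by (rule LeastI_ex) (use admissible_K in blast)
  hence "\<exists>d X. admissible X \<and> defect X = min_defect \<and> R.dim K X = d" by blast
  from LeastI_ex[OF this]
  have "\<exists>X. admissible X \<and> defect X = min_defect \<and> R.dim K X = atom_dim"
    unfolding atom_dim_def .
  thus ?thesis unfolding atom_def by blast
qed

text \<open>Two atoms meeting nontrivially coincide: by submodularity their intersection has minimal
  defect, hence dimension at least \<open>atom_dim\<close>, so it is all of both.\<close>

lemma atom_inter:
  assumes aX: "atom X" and aY: "atom Y" and meet: "X \<inter> Y \<noteq> {0}"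
  shows "X = Y"
proof -
  have fX: "R.finite_dimension K X" and fY: "R.finite_dimension K Y" and X0: "X \<noteq> {0}"
    using aX aY unfolding atom_def admissible_def by auto
  have sI: "Ksubspace K (X \<inter> Y)"
    using finite_dim_subspace fX fY Ksubspace_inter by blast
  have fI: "R.finite_dimension K (X \<inter> Y)" using dim_mono(1)[OF fX sI] by blast
  have "X \<subseteq> ssum X Y"
    using finite_dim_subspace[OF fY] unfolding ssum_def Ksubspace_def by force
  hence "admissible (ssum X Y)"
    using grassmann(1)[OF fX fY] X0 finite_dim_subspace[OF fX]
    unfolding admissible_def Ksubspace_def by blast
  moreover have "admissible (X \<inter> Y)" using fI meet unfolding admissible_def by blast
  ultimately have "min_defect \<le> defect (ssum X Y)" "min_defect \<le> defect (X \<inter> Y)"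
    by (auto intro: min_defect_le)
  hence "defect (X \<inter> Y) = min_defect"
    using defect_submodular[OF fX fY] aX aY unfolding atom_def by linarith
  hence "atom_dim \<le> R.dim K (X \<inter> Y)"
    using atom_dim_le \<open>admissible (X \<inter> Y)\<close> by blast
  hence "R.dim K (X \<inter> Y) = R.dim K X" "R.dim K (X \<inter> Y) = R.dim K Y"
    using dim_mono(2)[OF fX sI] dim_mono(2)[OF fY sI] aX aY unfolding atom_def by auto
  thus ?thesis
    using dim_eq_imp_eq[OF fX sI] dim_eq_imp_eq[OF fY sI] by blast
qed

lemma atom_left_mult:
  assumes aX: "atom X" and a: "a \<noteq> 0"
  shows "atom ((*) a ` X)"
proof -
  have fX: "R.finite_dimension K X" and X0: "X \<noteq> {0}"
    using aX unfolding atom_def admissible_def by auto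
  obtain x where "x \<in> X" "x \<noteq> 0"
    using X0 finite_dim_subspace[OF fX] unfolding Ksubspace_def by blast
  hence "a * x \<in> (*) a ` X" "a * x \<noteq> 0" using a by auto
  hence "(*) a ` X \<noteq> {0}" by blast
  thus ?thesis
    using aX left_mult_dim[OF a fX] defect_left_mult[OF a fX]
    unfolding atom_def admissible_def by simp
qed

text \<open>Translating any atom by the inverse of one of its nonzero elements gives an atom through 1,
  and such an atom is closed under multiplication: for \<open>a \<noteq> 0\<close> in it, the atom \<open>a\<inverse>H\<close> also
  contains 1, so \<open>a\<inverse>H = H\<close>.\<close>

lemma atom_one_exists: "\<exists>H. atom H \<and> 1 \<in> H"
proof -
  obtain X where aX: "atom X" using atom_exists by blast
  hence "X \<noteq> {0}" "Ksubspace K X"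
    using finite_dim_subspace unfolding atom_def admissible_def by auto
  then obtain x where x: "x \<in> X" "x \<noteq> 0" unfolding Ksubspace_def by blast
  have "atom ((*) (inverse x) ` X)" using atom_left_mult[OF aX] x by simp
  moreover have "1 \<in> (*) (inverse x) ` X" using x by (metis image_eqI left_inverse)
  ultimately show ?thesis by blast
qed

lemma atom_one_closed:
  assumes aH: "atom H" and one: "1 \<in> H" and a: "a \<in> H" and b: "b \<in> H"
  shows "a * b \<in> H"
proof (cases "a = 0")
  case True
  thus ?thesis using aH finite_dim_subspace unfolding atom_def admissible_def Ksubspace_def by auto
next
  case False
  have "atom ((*) (inverse a) ` H)" using atom_left_mult[OF aH] False by simp
  moreover have "1 \<in> H \<inter> (*) (inverse a) ` H" using one a False by (metis IntI image_eqI left_inverse)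
  ultimately have "H = (*) (inverse a) ` H"
    using atom_inter[OF aH] by (metis one_neq_zero singletonD)
  then obtain c where "c \<in> H" "b = inverse a * c" using b by blast
  thus ?thesis using False by (simp add: mult.assoc[symmetric])
qed

text \<open>When all elements outside K are transcendental, the atom through 1 is K itself, so the
  minimal defect is \<open>defect K = dim B - 1\<close>.\<close>

lemma min_defect_eq:
  assumes transc: "\<forall>x. x \<notin> K \<longrightarrow> transcendental_over K x"
  shows "min_defect = R.dim K B - 1"
proof -
  obtain H where aH: "atom H" and one: "1 \<in> H" using atom_one_exists by blast
  have fH: "R.finite_dimension K H" using aH unfolding atom_def admissible_def by simp
  have "H \<subseteq> K"
    using finite_dim_algebra_algebraic[OF fH one atom_one_closed[OF aH one]] transc
    unfolding transcendental_over_def by blast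
  moreover have "K \<subseteq> H"
    using finite_dim_subspace[OF fH] one unfolding Ksubspace_def by (metis mult.right_neutral subsetI)
  ultimately have "H = K" by blast
  hence "defect K = min_defect" using aH unfolding atom_def by simp
  thus ?thesis unfolding defect_def P_K dim_K by simp
qed

lemma dim_P_lower_bound:
  assumes transc: "\<forall>x. x \<notin> K \<longrightarrow> transcendental_over K x"
    and fA: "R.finite_dimension K A" and A0: "A \<noteq> {0}"
  shows "R.dim K A + R.dim K B \<le> R.dim K (P A) + 1"
proof -
  have "R.dim K B - 1 \<le> defect A"
    using min_defect_le min_defect_eq[OF transc] fA A0 unfolding admissible_def by metis
  moreover have "R.dim K B \<noteq> 0" using dim_zero[OF finite_dim_B] B_nonzero by blast
  ultimately show ?thesis using dim_le_dim_P[OF fA] unfolding defect_def by linarith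
qed
end

theorem mainTheorem7:
  fixes K :: "'a::division_ring set" and A B :: "'a set"
  assumes "is_subfield K" and "central K"
    and "\<forall>x. x \<notin> K \<longrightarrow> transcendental_over K x"
    and "Ksubspace K A" and "Ksubspace K B"
    and "A \<noteq> {0}" and "B \<noteq> {0}"
    and "Kfindim K A" and "Kfindim K B"
  shows "Kdim K (Kspan K (setprod A B)) + 1 \<ge> Kdim K A + Kdim K B"
proof -
  interpret central_subfield K
    using assms(1,2) by unfold_locales
  have fA: "R.finite_dimension K A" and fB: "R.finite_dimension K B"
    using Kfindim_imp_finite_dim assms(8,9) by auto
  interpret product_space K B
    using fB assms(7) by unfold_locales
  have "R.dim K A + R.dim K B \<le> R.dim K (P A) + 1"
    by (rule dim_P_lower_bound[OF assms(3) fA assms(6)])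
  thus ?thesis
    using Kdim_eq_dim[OF fA] Kdim_eq_dim[OF fB] Kdim_eq_dim[OF finite_dim_P[OF fA]]
    unfolding P_def by simp
qed

end
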